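(* Let $G=(\mathbb Z/a_1\mathbb Z)\times\dots\times(\mathbb Z/a_r\mathbb Z)$ be a finite Abelian group, let $f,g:G\to\mathbb C$ and let $n\ge 1$. Then $M_n(f;x_1,\dots,x_{n-1})=M_n(g;x_1,\dots,x_{n-1})$ for all $x_1,\dots,x_{n-1}\in G$ if and only if $\widehat f(x_1)\cdots\widehat f(x_n)=\widehat g(x_1)\cdots\widehat g(x_n)$ for all $x_1,\dots,x_n\in G$ with $x_1+\dots+x_n=0$.
   Context: Elements of $G$ are tuples $x=(x[1],\dots,x[r])$ with componentwise addition modulo $a_k$. Define $\chi(x,y)=\exp\left(2\pi i\sum_{k=1}^r \frac{x[k]y[k]}{a_k}\right)$. The discrete Fourier transform of $f$ is $\widehat f(x)=\sum_{y\in G}f(y)\overline{\chi(x,y)}$. The $n$-th autocorrelation is $M_n(f;x_1,\dots,x_{n-1})=\sum_{y\in G}f(y)f(y+x_1)\cdots f(y+x_{n-1})$. *)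

theory Defs
  imports "HOL-Analysis.Analysis"
begin

text \<open>The group G = Z/a_1 x ... x Z/a_r, elements are tuples indexed by 1..r,
  represented as functions nat => int with x k in {0..<a k} for k in {1..r}
  and x k = 0 outside {1..r}.\<close>

definition grp :: "nat \<Rightarrow> (nat \<Rightarrow> int) \<Rightarrow> (nat \<Rightarrow> int) set" where
  "grp r a = {x. (\<forall>k\<in>{1..r}. 0 \<le> x k \<and> x k < a k) \<and> (\<forall>k. k \<notin> {1..r} \<longrightarrow> x k = 0)}"

definition gadd :: "nat \<Rightarrow> (nat \<Rightarrow> int) \<Rightarrow> (nat \<Rightarrow> int) \<Rightarrow> (nat \<Rightarrow> int) \<Rightarrow> (nat \<Rightarrow> int)" where
  "gadd r a x y = (\<lambda>k. if k \<in> {1..r} then (x k + y k) mod a k else 0)"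

definition gzero :: "nat \<Rightarrow> int" where
  "gzero = (\<lambda>k. 0)"

fun gsum :: "nat \<Rightarrow> (nat \<Rightarrow> int) \<Rightarrow> (nat \<Rightarrow> (nat \<Rightarrow> int)) \<Rightarrow> nat \<Rightarrow> (nat \<Rightarrow> int)" where
  "gsum r a xs 0 = gzero"
| "gsum r a xs (Suc m) = gadd r a (gsum r a xs m) (xs (Suc m))"

definition chi :: "nat \<Rightarrow> (nat \<Rightarrow> int) \<Rightarrow> (nat \<Rightarrow> int) \<Rightarrow> (nat \<Rightarrow> int) \<Rightarrow> complex" where
  "chi r a x y = exp (2 * pi * \<i> * complex_of_real (\<Sum>k=1..r. real_of_int (x k * y k) / real_of_int (a k)))"

definition dft :: "nat \<Rightarrow> (nat \<Rightarrow> int) \<Rightarrow> ((nat \<Rightarrow> int) \<Rightarrow> complex) \<Rightarrow> (nat \<Rightarrow> int) \<Rightarrow> complex" where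
  "dft r a f x = (\<Sum>y\<in>grp r a. f y * cnj (chi r a x y))"

definition autocorr :: "nat \<Rightarrow> (nat \<Rightarrow> int) \<Rightarrow> nat \<Rightarrow> ((nat \<Rightarrow> int) \<Rightarrow> complex) \<Rightarrow> (nat \<Rightarrow> (nat \<Rightarrow> int)) \<Rightarrow> complex" where
  "autocorr r a n f xs = (\<Sum>y\<in>grp r a. f y * (\<Prod>i=1..n-1. f (gadd r a y (xs i))))"

end

theory Submission imports Defs begin

text \<open>Write \<open>H\<close> for the Fourier transform of \<open>h\<close> and regard \<open>M\<^sub>n(h; -)\<close> as a function
  on \<open>G\<^sup>n\<^sup>-\<^sup>1\<close>. Substituting \<open>y + x\<^sub>i\<close> for \<open>x\<^sub>i\<close> factors its Fourier transform at
  \<open>(\<xi>\<^sub>1, \<dots>, \<xi>\<^sub>n\<^sub>-\<^sub>1)\<close> into \<open>H(\<xi>\<^sub>1) \<cdots> H(\<xi>\<^sub>n\<^sub>-\<^sub>1)\<close> times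
  \<open>\<Sum>\<^sub>y h(y) \<chi>(\<xi>\<^sub>1 + \<dots> + \<xi>\<^sub>n\<^sub>-\<^sub>1, y) = H(\<xi>\<^sub>n)\<close>, where \<open>\<xi>\<^sub>n = -(\<xi>\<^sub>1 + \<dots> + \<xi>\<^sub>n\<^sub>-\<^sub>1)\<close>.
  Every \<open>(n-1)\<close>-tuple extends uniquely to an \<open>n\<close>-tuple with sum zero, so the hypothesis on
  the products \<open>H(\<xi>\<^sub>1) \<cdots> H(\<xi>\<^sub>n)\<close> says exactly that the Fourier transforms of
  \<open>M\<^sub>n(f; -)\<close> and \<open>M\<^sub>n(g; -)\<close> agree, and the Fourier transform on \<open>G\<^sup>n\<^sup>-\<^sup>1\<close> is
  injective by the orthogonality of characters.\<close>

definition expi2pi :: "real \<Rightarrow> complex" where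
  "expi2pi t = exp (2 * pi * \<i> * complex_of_real t)"

lemma expi2pi_add: "expi2pi (s + t) = expi2pi s * expi2pi t"
  unfolding expi2pi_def by (simp add: distrib_left exp_add)

lemma expi2pi_of_int: "expi2pi (real_of_int n) = 1"
proof -
  have "exp ((2 * complex_of_int n * pi) * \<i>) = 1"
    using exp_integer_2pi[of "real_of_int n"] by simp
  then show ?thesis unfolding expi2pi_def by (simp add: mult_ac)
qed

lemma cnj_expi2pi: "cnj (expi2pi t) = expi2pi (- t)"
  unfolding expi2pi_def by (simp add: exp_cnj)

lemma expi2pi_mult_cnj: "expi2pi t * cnj (expi2pi t) = 1"
  by (simp add: cnj_expi2pi expi2pi_add[symmetric]) (simp add: expi2pi_def)

lemma expi2pi_eq_1_imp_Ints: "expi2pi t = 1 \<Longrightarrow> t \<in> \<int>"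
proof -
  assume "expi2pi t = 1"
  then obtain m :: int where "Im (2 * pi * \<i> * complex_of_real t) = of_int (2 * m) * pi"
    unfolding expi2pi_def exp_eq_1 by blast
  then show ?thesis by simp
qed

lemma expi2pi_mult_of_nat: "expi2pi (real j * t) = expi2pi t ^ j"
  unfolding expi2pi_def by (simp add: exp_of_nat_mult[symmetric] mult_ac)

lemma sum_expi2pi_multiples:
  fixes A d :: int
  assumes "A \<ge> 1"
  shows "(\<Sum>j\<in>{0..<A}. expi2pi (real_of_int (j * d) / real_of_int A)) = (if A dvd d then of_int A else 0)"
proof -
  define w where "w = expi2pi (real_of_int d / real_of_int A)"
  have range: "{0..<A} = int ` {..<nat A}"
    using assms by (auto simp: image_iff intro!: bexI[where x="nat _"])
  have geometric: "(\<Sum>j\<in>{0..<A}. expi2pi (real_of_int (j * d) / real_of_int A)) = (\<Sum>j<nat A. w ^ j)"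
    unfolding range w_def by (subst sum.reindex) (auto simp: expi2pi_mult_of_nat[symmetric] inj_on_def)
  have w_eq_1: "w = 1 \<longleftrightarrow> A dvd d"
  proof
    assume "w = 1"
    then obtain q where "real_of_int d / real_of_int A = of_int q"
      unfolding w_def by (auto dest: expi2pi_eq_1_imp_Ints elim: Ints_cases)
    then have "real_of_int d = real_of_int (A * q)" using assms by (simp add: field_simps)
    then show "A dvd d" by (metis dvd_triv_left of_int_eq_iff)
  next
    assume "A dvd d"
    then show "w = 1" using assms by (auto simp: w_def expi2pi_of_int)
  qed
  have "w ^ nat A = 1"
    unfolding w_def expi2pi_mult_of_nat[symmetric] using assms by (simp add: expi2pi_of_int)
  then show ?thesis
    using geometric w_eq_1 geometric_sum[of w "nat A"] assms by auto
qed

definition gneg :: "nat \<Rightarrow> (nat \<Rightarrow> int) \<Rightarrow> (nat \<Rightarrow> int) \<Rightarrow> (nat \<Rightarrow> int)" where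
  "gneg r a x = (\<lambda>k. if k \<in> {1..r} then (- x k) mod a k else 0)"

lemma gadd_gneg: "gadd r a x (gneg r a x) = gzero"
  unfolding gadd_def gneg_def gzero_def by (auto simp: mod_add_right_eq)

lemma gsum_cong: "(\<forall>i\<in>{1..m}. xs i = ys i) \<Longrightarrow> gsum r a xs m = gsum r a ys m"
  by (induction m) auto

lemma gsum_Suc_gneg_eq_gzero:
  "gsum r a (xs(Suc m := gneg r a (gsum r a xs m))) (Suc m) = gzero"
proof -
  have "gsum r a (xs(Suc m := gneg r a (gsum r a xs m))) m = gsum r a xs m"
    by (rule gsum_cong) auto
  then show ?thesis by (simp add: gadd_gneg)
qed

lemma bij_betw_grp_PiE:
  "bij_betw (\<lambda>x. restrict x {1..r}) (grp r a) (PiE {1..r} (\<lambda>k. {0..<a k}))"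
proof (rule bij_betwI[where g = "\<lambda>p k. if k \<in> {1..r} then p k else 0"])
  show "(\<lambda>x. restrict x {1..r}) \<in> grp r a \<rightarrow> PiE {1..r} (\<lambda>k. {0..<a k})"
    unfolding grp_def by auto
  show "(\<lambda>p k. if k \<in> {1..r} then p k else 0) \<in> PiE {1..r} (\<lambda>k. {0..<a k}) \<rightarrow> grp r a"
    unfolding grp_def by (auto simp: PiE_def Pi_def)
  show "\<And>x. x \<in> grp r a \<Longrightarrow> (\<lambda>k. if k \<in> {1..r} then restrict x {1..r} k else 0) = x"
    unfolding grp_def by auto
  show "\<And>p. p \<in> PiE {1..r} (\<lambda>k. {0..<a k}) \<Longrightarrow> restrict (\<lambda>k. if k \<in> {1..r} then p k else 0) {1..r} = p"
    by (auto simp: PiE_def extensional_def)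
qed

lemma finite_grp [simp]: "finite (grp r a)"
  using bij_betw_finite[OF bij_betw_grp_PiE] by (simp add: finite_PiE)

lemma sum_grp_prod_components:
  "(\<Sum>x\<in>grp r a. \<Prod>k=1..r. (h k (x k) :: 'b :: comm_semiring_1)) = (\<Prod>k=1..r. \<Sum>j\<in>{0..<a k}. h k j)"
proof -
  have "(\<Prod>k=1..r. \<Sum>j\<in>{0..<a k}. h k j) = (\<Sum>p\<in>PiE {1..r} (\<lambda>k. {0..<a k}). \<Prod>k=1..r. h k (p k))"
    by (rule prod_sum_PiE) auto
  also have "\<dots> = (\<Sum>x\<in>grp r a. \<Prod>k=1..r. h k (restrict x {1..r} k))"
    by (rule sum.reindex_bij_betw[OF bij_betw_grp_PiE, symmetric])
  finally show ?thesis by simp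
qed

lemma chi_conv_prod: "chi r a x y = (\<Prod>k=1..r. expi2pi (real_of_int (x k * y k) / real_of_int (a k)))"
  unfolding chi_def expi2pi_def by (simp add: exp_sum[symmetric] sum_distrib_left)

lemma chi_commute: "chi r a x y = chi r a y x"
  unfolding chi_def by (simp add: mult.commute)

lemma chi_gzero: "chi r a gzero y = 1"
  unfolding chi_def gzero_def by simp

lemma chi_mult_cnj: "chi r a x y * cnj (chi r a x y) = 1"
  unfolding chi_conv_prod by (simp add: prod.distrib[symmetric] expi2pi_mult_cnj)

text \<open>Tuples in \<open>G\<^sup>m\<close> range over the extensional set \<open>PiE {1..m}\<close>, so \<open>F\<close> is only
  sampled at tuples that vanish outside \<open>{1..m}\<close>.\<close>

definition dft_tuple ::
    "nat \<Rightarrow> (nat \<Rightarrow> int) \<Rightarrow> nat \<Rightarrow> ((nat \<Rightarrow> nat \<Rightarrow> int) \<Rightarrow> complex) \<Rightarrow> (nat \<Rightarrow> nat \<Rightarrow> int) \<Rightarrow> complex" where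
  "dft_tuple r a m F \<xi> =
     (\<Sum>xs\<in>PiE {1..m} (\<lambda>_. grp r a). F xs * (\<Prod>i=1..m. cnj (chi r a (\<xi> i) (xs i))))"

lemma dft_tuple_cong: "(\<forall>i\<in>{1..m}. \<xi> i = \<xi>' i) \<Longrightarrow> dft_tuple r a m F \<xi> = dft_tuple r a m F \<xi>'"
  unfolding dft_tuple_def by (intro sum.cong refl arg_cong2[where f="(*)"] prod.cong) auto

lemma autocorr_restrict: "autocorr r a (Suc m) h (restrict xs {1..m}) = autocorr r a (Suc m) h xs"
  unfolding autocorr_def by (intro sum.cong refl arg_cong2[where f="(*)"] prod.cong) auto

context
  fixes r :: nat and a :: "nat \<Rightarrow> int"
  assumes a_pos: "\<forall>k\<in>{1..r}. a k \<ge> 1"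
begin

lemma gadd_in_grp: "gadd r a x y \<in> grp r a"
  using a_pos unfolding grp_def gadd_def by auto

lemma gzero_in_grp: "gzero \<in> grp r a"
  using a_pos unfolding grp_def gzero_def by auto

lemma gneg_in_grp: "gneg r a x \<in> grp r a"
  using a_pos unfolding grp_def gneg_def by auto

lemma card_grp: "(of_nat (card (grp r a)) :: 'b :: comm_ring_1) = (\<Prod>k=1..r. of_int (a k))"
proof -
  have "(of_nat (card (grp r a)) :: 'b) = (\<Sum>x\<in>grp r a. \<Prod>k=1..r. 1)" by simp
  also have "\<dots> = (\<Prod>k=1..r. \<Sum>j\<in>{0..<a k}. 1)" by (rule sum_grp_prod_components)
  also have "\<dots> = (\<Prod>k=1..r. of_int (a k))"
  proof (intro prod.cong refl)
    fix k assume "k \<in> {1..r}"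
    then have "a k \<ge> 0" using a_pos by force
    then show "(\<Sum>j\<in>{0..<a k}. 1) = (of_int (a k) :: 'b)" by (simp add: of_nat_nat)
  qed
  finally show ?thesis .
qed

lemma bij_betw_gadd: "bij_betw (gadd r a y) (grp r a) (grp r a)"
proof -
  have "inj_on (gadd r a y) (grp r a)"
  proof (rule inj_onI)
    fix x x' assume x: "x \<in> grp r a" and x': "x' \<in> grp r a" and eq: "gadd r a y x = gadd r a y x'"
    show "x = x'"
    proof
      fix k show "x k = x' k"
      proof (cases "k \<in> {1..r}")
        case True
        then have "(y k + x k) mod a k = (y k + x' k) mod a k"
          using fun_cong[OF eq, of k] unfolding gadd_def by simp
        then have "x k mod a k = x' k mod a k"
          by (metis add_diff_cancel_left' mod_diff_left_eq)
        then show ?thesis using x x' True unfolding grp_def by auto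
      next
        case False then show ?thesis using x x' unfolding grp_def by auto
      qed
    qed
  qed
  then show ?thesis
    using endo_inj_surj[OF finite_grp] gadd_in_grp unfolding bij_betw_def by blast
qed

lemma chi_gadd_right: "chi r a x (gadd r a y z) = chi r a x y * chi r a x z"
  unfolding chi_conv_prod prod.distrib[symmetric]
proof (rule prod.cong[OF refl])
  fix k assume k: "k \<in> {1..r}"
  define q where "q = (y k + z k) div a k"
  have "a k \<noteq> 0" using k a_pos by force
  have mod_eq: "(y k + z k) mod a k = y k + z k - a k * q"
    unfolding q_def by (simp add: minus_div_mult_eq_mod[symmetric])
  have "real_of_int (x k * gadd r a y z k) / real_of_int (a k)
      = real_of_int (x k * y k) / real_of_int (a k) + real_of_int (x k * z k) / real_of_int (a k)
        + real_of_int (- (x k * q))"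
    using k \<open>a k \<noteq> 0\<close> unfolding gadd_def mod_eq by (simp add: field_simps)
  then show "expi2pi (real_of_int (x k * gadd r a y z k) / real_of_int (a k)) =
      expi2pi (real_of_int (x k * y k) / real_of_int (a k)) * expi2pi (real_of_int (x k * z k) / real_of_int (a k))"
    by (simp only: expi2pi_add expi2pi_of_int) simp
qed

lemma chi_gadd_left: "chi r a (gadd r a y z) x = chi r a y x * chi r a z x"
  using chi_gadd_right chi_commute by metis

lemma prod_chi_eq_chi_gsum: "(\<Prod>i=1..m. chi r a (\<xi> i) y) = chi r a (gsum r a \<xi> m) y"
  by (induction m) (simp_all add: chi_gzero prod.nat_ivl_Suc' chi_gadd_left mult_ac)

lemma chi_eq_cnj_if_gadd_eq_gzero:
  assumes "gadd r a u v = gzero"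
  shows "chi r a u y = cnj (chi r a v y)"
proof -
  have "chi r a u y * chi r a v y = 1"
    using chi_gadd_left[of u v y] assms chi_gzero by simp
  then have "chi r a u y * (chi r a v y * cnj (chi r a v y)) = cnj (chi r a v y)"
    by (metis mult.assoc mult_1)
  then show ?thesis by (simp add: chi_mult_cnj)
qed

lemma chi_orthogonality:
  assumes w: "w \<in> grp r a" and x: "x \<in> grp r a"
  shows "(\<Sum>\<xi>\<in>grp r a. cnj (chi r a \<xi> w) * chi r a \<xi> x) = (if w = x then of_nat (card (grp r a)) else 0)"
proof -
  have "(\<Sum>\<xi>\<in>grp r a. cnj (chi r a \<xi> w) * chi r a \<xi> x)
     = (\<Sum>\<xi>\<in>grp r a. \<Prod>k=1..r. expi2pi (real_of_int (\<xi> k * (x k - w k)) / real_of_int (a k)))"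
    unfolding chi_conv_prod
    by (simp add: cnj_expi2pi prod.distrib[symmetric] expi2pi_add[symmetric]
        right_diff_distrib diff_divide_distrib)
  also have "\<dots> = (\<Prod>k=1..r. \<Sum>j\<in>{0..<a k}. expi2pi (real_of_int (j * (x k - w k)) / real_of_int (a k)))"
    by (rule sum_grp_prod_components)
  also have "\<dots> = (\<Prod>k=1..r. if a k dvd (x k - w k) then of_int (a k) else 0)"
    using a_pos by (intro prod.cong refl sum_expi2pi_multiples) auto
  also have "\<dots> = (if w = x then of_nat (card (grp r a)) else 0)"
  proof (cases "w = x")
    case True then show ?thesis by (simp add: card_grp)
  next
    case False
    then obtain k where ne: "w k \<noteq> x k" by blast
    have k: "k \<in> {1..r}"
    proof (rule ccontr)
      assume "k \<notin> {1..r}"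
      then have "w k = 0" "x k = 0" using w x unfolding grp_def by auto
      with ne show False by simp
    qed
    have "0 \<le> x k" "x k < a k" "0 \<le> w k" "w k < a k"
      using w x k unfolding grp_def by auto
    then have "\<bar>x k - w k\<bar> < a k" by linarith
    then have "\<not> a k dvd (x k - w k)"
      using ne dvd_imp_le_int[of "x k - w k" "a k"] by auto
    then show ?thesis using False k by (auto intro!: prod_zero bexI[of _ k])
  qed
  finally show ?thesis .
qed

lemma sum_translate_mult_cnj_chi:
  assumes "y \<in> grp r a"
  shows "(\<Sum>x\<in>grp r a. h (gadd r a y x) * cnj (chi r a \<xi> x)) = chi r a \<xi> y * dft r a h \<xi>"
proof -
  have "dft r a h \<xi> = (\<Sum>x\<in>grp r a. h (gadd r a y x) * cnj (chi r a \<xi> (gadd r a y x)))"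
    unfolding dft_def by (rule sum.reindex_bij_betw[OF bij_betw_gadd, symmetric])
  also have "\<dots> = cnj (chi r a \<xi> y) * (\<Sum>x\<in>grp r a. h (gadd r a y x) * cnj (chi r a \<xi> x))"
    by (simp add: chi_gadd_right sum_distrib_left mult_ac)
  finally have "chi r a \<xi> y * dft r a h \<xi>
      = (chi r a \<xi> y * cnj (chi r a \<xi> y)) * (\<Sum>x\<in>grp r a. h (gadd r a y x) * cnj (chi r a \<xi> x))"
    by (simp add: mult_ac)
  then show ?thesis by (simp add: chi_mult_cnj)
qed

lemma dft_tuple_inversion:
  assumes xs: "\<forall>i\<in>{1..m}. xs i \<in> grp r a"
  shows "(\<Sum>\<xi>\<in>PiE {1..m} (\<lambda>_. grp r a). dft_tuple r a m F \<xi> * (\<Prod>i=1..m. chi r a (\<xi> i) (xs i)))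
       = of_nat (card (grp r a)) ^ m * F (restrict xs {1..m})"
proof -
  let ?G = "grp r a" let ?PG = "PiE {1..m} (\<lambda>_. grp r a)" let ?c = "of_nat (card (grp r a)) :: complex"
  have "(\<Sum>\<xi>\<in>?PG. dft_tuple r a m F \<xi> * (\<Prod>i=1..m. chi r a (\<xi> i) (xs i)))
      = (\<Sum>ws\<in>?PG. F ws * (\<Sum>\<xi>\<in>?PG. \<Prod>i=1..m. cnj (chi r a (\<xi> i) (ws i)) * chi r a (\<xi> i) (xs i)))"
    unfolding dft_tuple_def sum_distrib_right
    by (subst sum.swap) (simp add: sum_distrib_left prod.distrib mult_ac)
  also have "\<dots> = (\<Sum>ws\<in>?PG. F ws * (\<Prod>i=1..m. \<Sum>\<eta>\<in>?G. cnj (chi r a \<eta> (ws i)) * chi r a \<eta> (xs i)))"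
    by (intro sum.cong refl arg_cong2[where f="(*)"] prod_sum_PiE[symmetric]) auto
  also have "\<dots> = (\<Sum>ws\<in>?PG. F ws * (\<Prod>i=1..m. if ws i = xs i then ?c else 0))"
  proof (intro sum.cong refl arg_cong2[where f="(*)"] prod.cong)
    fix ws i assume "ws \<in> ?PG" "i \<in> {1..m}"
    then show "(\<Sum>\<eta>\<in>?G. cnj (chi r a \<eta> (ws i)) * chi r a \<eta> (xs i)) = (if ws i = xs i then ?c else 0)"
      using xs by (intro chi_orthogonality) (auto simp: PiE_iff)
  qed
  also have "\<dots> = (\<Sum>ws\<in>?PG. F ws * (if ws = restrict xs {1..m} then ?c ^ m else 0))"
  proof (intro sum.cong refl arg_cong2[where f="(*)"])
    fix ws assume "ws \<in> ?PG"
    then have "(\<forall>i\<in>{1..m}. ws i = xs i) \<longleftrightarrow> ws = restrict xs {1..m}"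
      by (auto simp: PiE_def extensional_def)
    then show "(\<Prod>i=1..m. if ws i = xs i then ?c else 0) = (if ws = restrict xs {1..m} then ?c ^ m else 0)"
      by (auto intro: prod_zero)
  qed
  also have "\<dots> = ?c ^ m * F (restrict xs {1..m})"
    using xs by (simp add: if_distrib finite_PiE mult.commute cong: if_cong)
  finally show ?thesis .
qed

lemma dft_tuple_eq_imp_eq:
  assumes "\<And>\<xi>. \<xi> \<in> PiE {1..m} (\<lambda>_. grp r a) \<Longrightarrow> dft_tuple r a m F \<xi> = dft_tuple r a m F' \<xi>"
    and xs: "\<forall>i\<in>{1..m}. xs i \<in> grp r a"
  shows "F (restrict xs {1..m}) = F' (restrict xs {1..m})"
proof -
  have "of_nat (card (grp r a)) ^ m * F (restrict xs {1..m})
      = (\<Sum>\<xi>\<in>PiE {1..m} (\<lambda>_. grp r a). dft_tuple r a m F \<xi> * (\<Prod>i=1..m. chi r a (\<xi> i) (xs i)))"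
    by (rule dft_tuple_inversion[OF xs, symmetric])
  also have "\<dots> = (\<Sum>\<xi>\<in>PiE {1..m} (\<lambda>_. grp r a). dft_tuple r a m F' \<xi> * (\<Prod>i=1..m. chi r a (\<xi> i) (xs i)))"
    using assms(1) by (intro sum.cong) auto
  also have "\<dots> = of_nat (card (grp r a)) ^ m * F' (restrict xs {1..m})"
    by (rule dft_tuple_inversion[OF xs])
  finally have "of_nat (card (grp r a)) ^ m * F (restrict xs {1..m})
      = of_nat (card (grp r a)) ^ m * F' (restrict xs {1..m})" .
  moreover have "grp r a \<noteq> {}"
    using gzero_in_grp by blast
  ultimately show ?thesis by simp
qed

lemma dft_tuple_autocorr:
  assumes zero_sum: "gsum r a \<xi> (Suc m) = gzero"
  shows "dft_tuple r a m (autocorr r a (Suc m) h) \<xi> = (\<Prod>i=1..Suc m. dft r a h (\<xi> i))"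
proof -
  let ?G = "grp r a" let ?PG = "PiE {1..m} (\<lambda>_. grp r a)"
  have chi_last: "(\<Prod>i=1..m. chi r a (\<xi> i) y) = cnj (chi r a (\<xi> (Suc m)) y)" for y
    unfolding prod_chi_eq_chi_gsum
    by (rule chi_eq_cnj_if_gadd_eq_gzero) (use zero_sum in simp)
  have "dft_tuple r a m (autocorr r a (Suc m) h) \<xi>
      = (\<Sum>y\<in>?G. h y * (\<Sum>xs\<in>?PG. \<Prod>i=1..m. h (gadd r a y (xs i)) * cnj (chi r a (\<xi> i) (xs i))))"
    unfolding dft_tuple_def autocorr_def diff_Suc_1 sum_distrib_right
    by (subst sum.swap) (simp add: sum_distrib_left prod.distrib mult_ac)
  also have "\<dots> = (\<Sum>y\<in>?G. h y * (\<Prod>i=1..m. \<Sum>x\<in>?G. h (gadd r a y x) * cnj (chi r a (\<xi> i) x)))"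
    by (intro sum.cong refl arg_cong2[where f="(*)"] prod_sum_PiE[symmetric]) auto
  also have "\<dots> = (\<Sum>y\<in>?G. h y * ((\<Prod>i=1..m. chi r a (\<xi> i) y) * (\<Prod>i=1..m. dft r a h (\<xi> i))))"
    by (simp add: sum_translate_mult_cnj_chi prod.distrib)
  also have "\<dots> = dft r a h (\<xi> (Suc m)) * (\<Prod>i=1..m. dft r a h (\<xi> i))"
    unfolding chi_last dft_def by (simp add: sum_distrib_right mult_ac)
  also have "\<dots> = (\<Prod>i=1..Suc m. dft r a h (\<xi> i))"
    by (simp add: prod.nat_ivl_Suc')
  finally show ?thesis .
qed

lemma dft_prod_eq_if_autocorr_eq:
  assumes same_autocorr: "\<forall>xs. (\<forall>i\<in>{1..m}. xs i \<in> grp r a) \<longrightarrow>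
      autocorr r a (Suc m) f xs = autocorr r a (Suc m) g xs"
    and zero_sum: "gsum r a \<xi> (Suc m) = gzero"
  shows "(\<Prod>i=1..Suc m. dft r a f (\<xi> i)) = (\<Prod>i=1..Suc m. dft r a g (\<xi> i))"
proof -
  have "dft_tuple r a m (autocorr r a (Suc m) f) \<xi> = dft_tuple r a m (autocorr r a (Suc m) g) \<xi>"
    unfolding dft_tuple_def
  proof (intro sum.cong refl arg_cong2[where f="(*)"])
    fix xs assume "xs \<in> PiE {1..m} (\<lambda>_. grp r a)"
    then show "autocorr r a (Suc m) f xs = autocorr r a (Suc m) g xs"
      using same_autocorr by (simp add: PiE_iff)
  qed
  then show ?thesis by (simp only: dft_tuple_autocorr[OF zero_sum])
qed

lemma autocorr_eq_if_dft_prod_eq: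
  assumes same_dft: "\<forall>\<xi>. (\<forall>i\<in>{1..Suc m}. \<xi> i \<in> grp r a) \<and> gsum r a \<xi> (Suc m) = gzero \<longrightarrow>
      (\<Prod>i=1..Suc m. dft r a f (\<xi> i)) = (\<Prod>i=1..Suc m. dft r a g (\<xi> i))"
    and xs: "\<forall>i\<in>{1..m}. xs i \<in> grp r a"
  shows "autocorr r a (Suc m) f xs = autocorr r a (Suc m) g xs"
proof -
  have "dft_tuple r a m (autocorr r a (Suc m) f) \<xi> = dft_tuple r a m (autocorr r a (Suc m) g) \<xi>"
    if "\<xi> \<in> PiE {1..m} (\<lambda>_. grp r a)" for \<xi>
  proof -
    define \<xi>' where "\<xi>' = \<xi>(Suc m := gneg r a (gsum r a \<xi> m))"
    have zero_sum: "gsum r a \<xi>' (Suc m) = gzero"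
      unfolding \<xi>'_def by (rule gsum_Suc_gneg_eq_gzero)
    have "\<forall>i\<in>{1..Suc m}. \<xi>' i \<in> grp r a"
      using that gneg_in_grp by (auto simp: \<xi>'_def PiE_iff)
    then have "dft_tuple r a m (autocorr r a (Suc m) f) \<xi>' = dft_tuple r a m (autocorr r a (Suc m) g) \<xi>'"
      using same_dft zero_sum by (simp only: dft_tuple_autocorr[OF zero_sum])
    moreover have "dft_tuple r a m F \<xi> = dft_tuple r a m F \<xi>'" for F
      by (rule dft_tuple_cong) (simp add: \<xi>'_def)
    ultimately show ?thesis by simp
  qed
  then have "autocorr r a (Suc m) f (restrict xs {1..m}) = autocorr r a (Suc m) g (restrict xs {1..m})"
    using xs by (rule dft_tuple_eq_imp_eq)
  then show ?thesis by (simp only: autocorr_restrict)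
qed

end

theorem corollary1:
  fixes r :: nat and a :: "nat \<Rightarrow> int" and f g :: "(nat \<Rightarrow> int) \<Rightarrow> complex" and n :: nat
  assumes "\<forall>k\<in>{1..r}. a k \<ge> 1"
    and "n \<ge> 1"
  shows "(\<forall>xs. (\<forall>i\<in>{1..n-1}. xs i \<in> grp r a) \<longrightarrow> autocorr r a n f xs = autocorr r a n g xs)
     \<longleftrightarrow> (\<forall>xs. (\<forall>i\<in>{1..n}. xs i \<in> grp r a) \<and> gsum r a xs n = gzero \<longrightarrow>
            (\<Prod>i=1..n. dft r a f (xs i)) = (\<Prod>i=1..n. dft r a g (xs i)))"
proof -
  obtain m where n: "n = Suc m" using assms(2) by (cases n) auto
  show ?thesis
    unfolding n diff_Suc_1
    using dft_prod_eq_if_autocorr_eq[OF assms(1)] autocorr_eq_if_dft_prod_eq[OF assms(1)]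
    by blast
qed

end
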